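(* Let $z_\alpha,z_\beta$ be the upper $\alpha$ and $\beta$ quantiles of the standard normal distribution, with $0<\alpha,\beta<1/2$. Let $\theta=(p_1^{(0)},p_2^{(0)})$ with $0<p_k^{(0)}<1/2$, and $\lambda=(\delta_1,\delta_2)$ with $\delta_k<0$ and $p_k^{(0)}+\delta_k>0$ ($k=1,2$); write $q_k^{(0)}=1-p_k^{(0)}$. For a correlation value $\rho$ define $$p_*^{(0)}(\theta,\rho)=1-q_1^{(0)}q_2^{(0)}-\rho\sqrt{p_1^{(0)}p_2^{(0)}q_1^{(0)}q_2^{(0)}},$$ $$\delta_*(\theta,\lambda,\rho)=\delta_1q_2^{(0)}+\delta_2q_1^{(0)}-\delta_1\delta_2+\rho\sqrt{p_1^{(0)}p_2^{(0)}q_1^{(0)}q_2^{(0)}}-\rho\sqrt{(p_1^{(0)}+\delta_1)(p_2^{(0)}+\delta_2)(q_1^{(0)}-\delta_1)(q_2^{(0)}-\delta_2)},$$ and $$n(\theta,\lambda,\rho)=\frac{2(z_\alpha+z_\beta)^2\Big(p_*^{(0)}(1-p_*^{(0)})+(p_*^{(0)}+\delta_* )(1-p_*^{(0)}-\delta_* )\Big)}{\delta_*^2},$$ where $p_*^{(0)}=p_*^{(0)}(\theta,\rho)$, $\delta_*=\delta_*(\theta,\lambda,\rho)$. Then, for fixed $\theta$ and $\lambda$, $n(\theta,\lambda,\rho)$ is an increasing function of $\rho$ on the interval of admissible correlation values $\rho\in[B_L(\theta,\lambda),B_U(\theta,\lambda)]$, where $$B_L=\max\left\{-\sqrt{\tfrac{p_1^{(0)}p_2^{(0)}}{q_1^{(0)}q_2^{(0)}}},\,-\sqrt{\tfrac{q_1^{(0)}q_2^{(0)}}{p_1^{(0)}p_2^{(0)}}},\,-\sqrt{\tfrac{(p_1^{(0)}+\delta_1)(p_2^{(0)}+\delta_2)}{(q_1^{(0)}-\delta_1)(q_2^{(0)}-\delta_2)}},\,-\sqrt{\tfrac{(q_1^{(0)}-\delta_1)(q_2^{(0)}-\delta_2)}{(p_1^{(0)}+\delta_1)(p_2^{(0)}+\delta_2)}}\right\},$$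 $$B_U=\min\left\{\sqrt{\tfrac{p_1^{(0)}q_2^{(0)}}{p_2^{(0)}q_1^{(0)}}},\,\sqrt{\tfrac{p_2^{(0)}q_1^{(0)}}{p_1^{(0)}q_2^{(0)}}},\,\sqrt{\tfrac{(p_1^{(0)}+\delta_1)(q_2^{(0)}-\delta_2)}{(p_2^{(0)}+\delta_2)(q_1^{(0)}-\delta_1)}},\,\sqrt{\tfrac{(p_2^{(0)}+\delta_2)(q_1^{(0)}-\delta_1)}{(p_1^{(0)}+\delta_1)(q_2^{(0)}-\delta_2)}}\right\}.$$ In particular $n(\theta,\lambda,B_L)\le n(\theta,\lambda,\rho)\le n(\theta,\lambda,B_U)$ for all admissible $\rho$.
   Context: Setting: two-arm balanced trial (control group 0, treatment group 1) whose primary endpoint is a composite binary endpoint, defined as the occurrence of at least one of two binary events. $p_k^{(0)}$ are the control-group event rates of the components, $p_k^{(0)}+\delta_k$ the treatment-group rates, and $\rho$ is the Pearson correlation between the two component indicators, assumed equal in both groups; $B_L,B_U$ are the bounds within which such a common correlation is attainable in both groups. $p_*^{(0)}(\theta,\rho)$ is the composite event probability in the control group, $\delta_*(\theta,\lambda,\rho)$ the composite risk difference, and $n(\theta,\lambda,\rho)$ the total sample size for a one-sided test of $H_0:\delta_*=0$ vs $H_1:\delta_*<0$ at level $\alpha$ with power $1-\beta$ using the unpooled variance estimate. *)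

theory Defs
  imports "HOL-Probability.Probability"
begin

definition std_normal :: "real measure" where
  "std_normal = density lborel std_normal_density"

definition is_upper_quantile :: "real \<Rightarrow> real \<Rightarrow> bool" where
  "is_upper_quantile a z \<longleftrightarrow> measure std_normal {z<..} = a"

definition p_star0 :: "real \<times> real \<Rightarrow> real \<Rightarrow> real" where
  "p_star0 \<theta> \<rho> = (case \<theta> of (p1, p2) \<Rightarrow>
     1 - (1 - p1) * (1 - p2) - \<rho> * sqrt (p1 * p2 * (1 - p1) * (1 - p2)))"

definition delta_star :: "real \<times> real \<Rightarrow> real \<times> real \<Rightarrow> real \<Rightarrow> real" where
  "delta_star \<theta> lam \<rho> = (case \<theta> of (p1, p2) \<Rightarrow> (case lam of (d1, d2) \<Rightarrow>
     d1 * (1 - p2) + d2 * (1 - p1) - d1 * d2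
     + \<rho> * sqrt (p1 * p2 * (1 - p1) * (1 - p2))
     - \<rho> * sqrt ((p1 + d1) * (p2 + d2) * ((1 - p1) - d1) * ((1 - p2) - d2))))"

definition sample_size :: "real \<Rightarrow> real \<Rightarrow> real \<times> real \<Rightarrow> real \<times> real \<Rightarrow> real \<Rightarrow> real" where
  "sample_size za zb \<theta> lam \<rho> =
     (let ps = p_star0 \<theta> \<rho>; ds = delta_star \<theta> lam \<rho> in
      2 * (za + zb)\<^sup>2 * (ps * (1 - ps) + (ps + ds) * (1 - ps - ds)) / ds\<^sup>2)"

definition B_L :: "real \<times> real \<Rightarrow> real \<times> real \<Rightarrow> real" where
  "B_L \<theta> lam = (case \<theta> of (p1, p2) \<Rightarrow> (case lam of (d1, d2) \<Rightarrow>
     let q1 = 1 - p1; q2 = 1 - p2 in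
     Max {- sqrt ((p1 * p2) / (q1 * q2)), - sqrt ((q1 * q2) / (p1 * p2)),
          - sqrt (((p1 + d1) * (p2 + d2)) / ((q1 - d1) * (q2 - d2))),
          - sqrt (((q1 - d1) * (q2 - d2)) / ((p1 + d1) * (p2 + d2)))}))"

definition B_U :: "real \<times> real \<Rightarrow> real \<times> real \<Rightarrow> real" where
  "B_U \<theta> lam = (case \<theta> of (p1, p2) \<Rightarrow> (case lam of (d1, d2) \<Rightarrow>
     let q1 = 1 - p1; q2 = 1 - p2 in
     Min {sqrt ((p1 * q2) / (p2 * q1)), sqrt ((p2 * q1) / (p1 * q2)),
          sqrt (((p1 + d1) * (q2 - d2)) / ((p2 + d2) * (q1 - d1))),
          sqrt (((p2 + d2) * (q1 - d1)) / ((p1 + d1) * (q2 - d2)))}))"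

end

theory Submission
  imports Defs
begin

text \<open>
  Write \<open>u\<close> and \<open>v\<close> for the composite event rates \<open>p\<^sub>*\<close> and \<open>p\<^sub>* + \<delta>\<^sub>*\<close> of the two arms.
  Both are affine in \<open>\<rho>\<close>, with slopes \<open>-s\<^sub>0\<close> and \<open>-s\<^sub>1\<close>, where \<open>s\<^sub>0 = sqrt (p\<^sub>1 q\<^sub>1 p\<^sub>2 q\<^sub>2)\<close>
  and \<open>s\<^sub>1\<close> is its treatment analogue, and \<open>n\<close> is a positive multiple of
  \<open>(u (1 - u) + v (1 - v)) / (v - u)\<^sup>2\<close>. Differentiating in \<open>\<rho>\<close>, \<open>n\<close> increases wherever
  \<open>0 < v < u < 1\<close>, \<open>s\<^sub>1 < s\<^sub>0\<close> and \<open>s\<^sub>1\<^sup>2 u (1 - u) \<le> s\<^sub>0\<^sup>2 v (1 - v)\<close>. In the square-root odds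
  \<open>x\<^sub>k = sqrt (p\<^sub>k / q\<^sub>k)\<close> one has \<open>u (1 - u) = s\<^sub>0\<^sup>2 (\<Gamma> - \<rho>\<^sup>2)\<close> for an explicit rational
  function \<open>\<Gamma>\<close> of \<open>\<rho>, x\<^sub>1, x\<^sub>2\<close> which, for admissible \<open>\<rho>\<close>, decreases when both odds decrease.
  The treatment lowers both odds, which gives the last inequality; the admissibility bounds
  also give \<open>v < u\<close>.
\<close>

section \<open>Upper quantiles of the standard normal distribution\<close>

lemma prob_space_std_normal: "prob_space std_normal"
  unfolding std_normal_def by (rule prob_space_normal_density) simp

lemma sets_std_normal [simp]: "sets std_normal = sets borel"
  by (simp add: std_normal_def)

lemma space_std_normal [simp]: "space std_normal = UNIV"
  by (simp add: std_normal_def)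

lemma emeasure_std_normal_greaterThan_0:
  "emeasure std_normal {0<..} = emeasure std_normal {..<0}"
proof -
  let ?f = "\<lambda>x::real. ennreal (std_normal_density x)"
  have "emeasure std_normal {0<..} = (\<integral>\<^sup>+ x. ?f x * indicator {0<..} x \<partial>lborel)"
    unfolding std_normal_def by (rule emeasure_density) auto
  also have "\<dots> = (\<integral>\<^sup>+ x. ?f x * indicator {0<..} x \<partial>(distr lborel borel uminus))"
    by (simp add: lborel_distr_uminus)
  also have "\<dots> = (\<integral>\<^sup>+ x. ?f (-x) * indicator {0<..} (-x) \<partial>lborel)"
    by (rule nn_integral_distr) auto
  also have "\<dots> = (\<integral>\<^sup>+ x. ?f x * indicator {..<0} x \<partial>lborel)"
    by (rule nn_integral_cong) (auto simp: std_normal_density_def indicator_def)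
  also have "\<dots> = emeasure std_normal {..<0}"
    unfolding std_normal_def by (rule emeasure_density[symmetric]) auto
  finally show ?thesis .
qed

lemma emeasure_std_normal_singleton: "emeasure std_normal {x} = 0"
proof -
  have "{x} \<in> null_sets lborel"
    by (rule finite_imp_null_set_lborel) simp
  then have "AE y in lborel. y \<in> {x} \<longrightarrow> ennreal (std_normal_density y) = 0"
    by (rule AE_I') auto
  then have "{x} \<in> null_sets std_normal"
    unfolding std_normal_def by (subst null_sets_density_iff) auto
  then show ?thesis
    by auto
qed

lemma measure_std_normal_greaterThan_0: "measure std_normal {0<..} = 1/2"
proof -
  interpret prob_space std_normal
    by (rule prob_space_std_normal)
  have "prob ({..<0} \<union> {0} \<union> {0<..}) = prob ({..<0} \<union> {0}) + prob {0<..}"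
    by (rule finite_measure_Union) auto
  also have "prob ({..<0} \<union> {0}) = prob {..<0} + prob {0}"
    by (rule finite_measure_Union) auto
  also have "{..<0} \<union> {0} \<union> {0<..} = (UNIV :: real set)"
    by auto
  finally have "prob {..<0} + prob {0} + prob {0<..} = 1"
    using prob_space by simp
  then show ?thesis
    using emeasure_std_normal_greaterThan_0 emeasure_std_normal_singleton
    by (simp add: measure_def)
qed

lemma upper_quantile_pos:
  assumes "is_upper_quantile a z" "a < 1/2"
  shows "0 < z"
proof (rule ccontr)
  interpret prob_space std_normal
    by (rule prob_space_std_normal)
  assume "\<not> 0 < z"
  then have "prob {0<..} \<le> prob {z<..}"
    by (intro finite_measure_mono) auto
  with assms show False
    by (simp add: is_upper_quantile_def measure_std_normal_greaterThan_0)
qed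

section \<open>Square-root odds coordinates\<close>

definition root_odds :: "real \<Rightarrow> real" where
  "root_odds p = sqrt (p / (1 - p))"

lemma root_odds_pos: "0 < p \<Longrightarrow> p < 1 \<Longrightarrow> 0 < root_odds p"
  by (simp add: root_odds_def)

lemma root_odds_less_1: "p < 1/2 \<Longrightarrow> root_odds p < 1"
  by (simp add: root_odds_def divide_less_eq)

lemma root_odds_strict_mono: "0 \<le> p' \<Longrightarrow> p' < p \<Longrightarrow> p < 1 \<Longrightarrow> root_odds p' < root_odds p"
  by (simp add: root_odds_def field_simps)

lemma
  assumes "0 \<le> p" "p < 1"
  shows one_minus_prob_eq_root_odds: "1 - p = 1 / (1 + (root_odds p)\<^sup>2)"
    and prob_mult_one_minus_eq_root_odds:
      "p * (1 - p) = (root_odds p)\<^sup>2 / (1 + (root_odds p)\<^sup>2)\<^sup>2"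
  using assms by (simp_all add: root_odds_def field_simps power2_eq_square)

text \<open>
  With \<open>p\<^sub>k = x\<^sub>k\<^sup>2 / (1 + x\<^sub>k\<^sup>2)\<close>, \<open>sd_prod x\<^sub>1 x\<^sub>2\<close> is \<open>sqrt (p\<^sub>1 q\<^sub>1 p\<^sub>2 q\<^sub>2)\<close> and
  \<open>no_event_prob \<rho> x\<^sub>1 x\<^sub>2 = q\<^sub>1 q\<^sub>2 + \<rho> sqrt (p\<^sub>1 q\<^sub>1 p\<^sub>2 q\<^sub>2)\<close> is the probability that neither
  component event occurs, i.e. \<open>1 - p\<^sub>*\<close>.
\<close>

definition sd_prod :: "real \<Rightarrow> real \<Rightarrow> real" where
  "sd_prod x y = x * y / ((1 + x\<^sup>2) * (1 + y\<^sup>2))"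

definition no_event_prob :: "real \<Rightarrow> real \<Rightarrow> real \<Rightarrow> real" where
  "no_event_prob r x y = 1 / ((1 + x\<^sup>2) * (1 + y\<^sup>2)) + r * sd_prod x y"

lemma sd_prod_pos: "0 < x \<Longrightarrow> 0 < y \<Longrightarrow> 0 < sd_prod x y"
  by (simp add: sd_prod_def add_pos_nonneg)

lemma sd_prod_commute: "sd_prod x y = sd_prod y x"
  by (simp add: sd_prod_def ac_simps)

lemma no_event_prob_commute: "no_event_prob r x y = no_event_prob r y x"
  by (simp add: no_event_prob_def sd_prod_commute ac_simps)

lemma no_event_prob_eq: "no_event_prob r x y = (1 + r * x * y) / ((1 + x\<^sup>2) * (1 + y\<^sup>2))"
  by (simp add: no_event_prob_def sd_prod_def add_divide_distrib)

lemma sqrt_eq_sd_prod_root_odds: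
  assumes "0 < p1" "p1 < 1" "0 < p2" "p2 < 1"
  shows "sqrt (p1 * p2 * (1 - p1) * (1 - p2)) = sd_prod (root_odds p1) (root_odds p2)"
proof -
  have "p1 * p2 * (1 - p1) * (1 - p2) = (p1 * (1 - p1)) * (p2 * (1 - p2))"
    by (simp add: ac_simps)
  also have "\<dots> = (sd_prod (root_odds p1) (root_odds p2))\<^sup>2"
    using assms by (simp add: prob_mult_one_minus_eq_root_odds sd_prod_def power_mult_distrib power_divide)
  finally show ?thesis
    using sd_prod_pos[OF root_odds_pos root_odds_pos, of p1 p2] assms by simp
qed

lemma no_event_prob_root_odds:
  assumes "0 < p1" "p1 < 1" "0 < p2" "p2 < 1"
  shows "(1 - p1) * (1 - p2) + r * sqrt (p1 * p2 * (1 - p1) * (1 - p2))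
           = no_event_prob r (root_odds p1) (root_odds p2)"
  unfolding sqrt_eq_sd_prod_root_odds[OF assms]
  using assms by (simp add: no_event_prob_def one_minus_prob_eq_root_odds)

lemma B_L_ge:
  "- (root_odds p1 * root_odds p2) \<le> B_L (p1, p2) (d1, d2)"
  "- (root_odds (p1 + d1) * root_odds (p2 + d2)) \<le> B_L (p1, p2) (d1, d2)"
  by (simp_all add: B_L_def root_odds_def real_sqrt_mult[symmetric] algebra_simps)

lemma B_U_le:
  "B_U (p1, p2) (d1, d2) \<le> root_odds p1 / root_odds p2"
  "B_U (p1, p2) (d1, d2) \<le> root_odds p2 / root_odds p1"
  by (simp_all add: B_U_def root_odds_def real_sqrt_divide[symmetric] algebra_simps)

lemma le_one_of_cross_mult_le:
  fixes r x y :: real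
  assumes "0 < x" "0 < y" "r * y \<le> x" "r * x \<le> y"
  shows "r \<le> 1"
proof -
  have "r * (x + y) \<le> 1 * (x + y)"
    using assms by (simp add: distrib_left)
  then show ?thesis
    using assms by (simp add: mult_le_cancel_right)
qed

lemma divide_one_plus_square_strict_mono:
  fixes x x' :: real
  assumes "0 < x'" "x' < x" "x < 1"
  shows "x' / (1 + x'\<^sup>2) < x / (1 + x\<^sup>2)"
proof -
  have "x * x' < 1"
    using assms mult_strict_mono[of x 1 x' 1] by auto
  moreover have "x * (1 + x'\<^sup>2) - x' * (1 + x\<^sup>2) = (x - x') * (1 - x * x')"
    by (simp add: algebra_simps power2_eq_square)
  ultimately have "x' * (1 + x\<^sup>2) < x * (1 + x'\<^sup>2)"
    using assms by (smt (verit) mult_pos_pos)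
  then show ?thesis
    by (simp add: field_simps add_pos_nonneg)
qed

lemma sd_prod_strict_mono:
  assumes "0 < x'" "x' < x" "x < 1" "0 < y'" "y' < y" "y < 1"
  shows "sd_prod x' y' < sd_prod x y"
proof -
  have "sd_prod x' y' = (x' / (1 + x'\<^sup>2)) * (y' / (1 + y'\<^sup>2))"
    by (simp add: sd_prod_def)
  also have "\<dots> < (x / (1 + x\<^sup>2)) * (y / (1 + y\<^sup>2))"
    using assms divide_one_plus_square_strict_mono[of x' x] divide_one_plus_square_strict_mono[of y' y]
    by (intro mult_strict_mono) (auto simp: add_pos_nonneg)
  also have "\<dots> = sd_prod x y"
    by (simp add: sd_prod_def)
  finally show ?thesis .
qed

lemma no_event_prob_bounds:
  assumes "0 < x" "x < 1" "0 < y" "y < 1" "- (x * y) \<le> r" "r \<le> 1"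
  shows "0 < no_event_prob r x y" "no_event_prob r x y < 1"
proof -
  have den: "0 < (1 + x\<^sup>2) * (1 + y\<^sup>2)"
    by (auto simp: add_pos_nonneg)
  have xy: "0 < x * y" "x * y < 1"
    using assms mult_strict_mono[of x 1 y 1] by auto
  have "- (x * y) * (x * y) \<le> r * (x * y)"
    using assms xy by (intro mult_right_mono) auto
  moreover have "(x * y) * (x * y) < 1"
    using xy mult_strict_mono[of "x * y" 1 "x * y" 1] by auto
  ultimately have "0 < 1 + r * x * y"
    by (simp add: algebra_simps)
  then show "0 < no_event_prob r x y"
    using den by (simp add: no_event_prob_eq)
  have "r * (x * y) \<le> x * y"
    using assms xy by (simp add: mult_le_cancel_right1)
  moreover have "x * y < x\<^sup>2 + y\<^sup>2 + x\<^sup>2 * y\<^sup>2"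
  proof -
    have "x\<^sup>2 + y\<^sup>2 - x * y = (x - y)\<^sup>2 + x * y"
      by (simp add: algebra_simps power2_eq_square)
    moreover have "0 < x\<^sup>2 * y\<^sup>2"
      using assms by simp
    ultimately show ?thesis
      using xy by (smt (verit) zero_le_power2)
  qed
  ultimately have "1 + r * x * y < (1 + x\<^sup>2) * (1 + y\<^sup>2)"
    by (simp add: algebra_simps)
  then show "no_event_prob r x y < 1"
    using den by (simp add: no_event_prob_eq)
qed

text \<open>At \<open>\<rho> = x/y\<close> (for \<open>x \<le> y\<close>) the first event is contained in the second, so the
  probability of no event is \<open>q\<^sub>2 = 1/(1 + y\<^sup>2)\<close>.\<close>

lemma no_event_prob_ratio_eq:
  assumes "0 < y"
  shows "no_event_prob (x / y) x y = 1 / (1 + y\<^sup>2)"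
proof -
  have "x / y * x * y = x\<^sup>2"
    using assms by (simp add: power2_eq_square)
  moreover have "1 + x\<^sup>2 \<noteq> 0"
    by (smt (verit) zero_le_power2)
  ultimately show ?thesis
    by (simp add: no_event_prob_eq)
qed

lemma no_event_prob_ratio_gt:
  assumes "0 < x'" "x' < x" "x \<le> y" "0 < y'" "y' < y" "y < 1"
  shows "1 / (1 + y\<^sup>2) < no_event_prob (x / y) x' y'"
proof -
  define s where "s = x'\<^sup>2"
  have "0 < y * y'" "y * y' < 1"
    using assms mult_strict_mono[of y 1 y' 1] by auto
  then have "s * (1 - y * y') \<le> s"
    unfolding s_def by (simp add: mult_left_le)
  also have "s \<le> y\<^sup>2"
    unfolding s_def using assms by (intro power_mono) auto
  also have "y\<^sup>2 < y * (y + y')"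
    using assms by (simp add: power2_eq_square algebra_simps)
  finally have "0 < (y - y') * (y * (y + y') - s * (1 - y * y'))"
    using assms by simp
  also have "\<dots> = (y + s * y') * (1 + y\<^sup>2) - (1 + s) * (1 + y'\<^sup>2) * y"
    by (simp add: algebra_simps power2_eq_square)
  finally have "(1 + s) * (1 + y'\<^sup>2) * y < (y + s * y') * (1 + y\<^sup>2)"
    by simp
  also have "s * y' \<le> x * x' * y'"
    unfolding s_def power2_eq_square using assms by (intro mult_right_mono) auto
  then have "(y + s * y') * (1 + y\<^sup>2) \<le> (y + x * x' * y') * (1 + y\<^sup>2)"
    by (intro mult_right_mono) auto
  finally have key: "y * ((1 + x'\<^sup>2) * (1 + y'\<^sup>2)) < (y + x * x' * y') * (1 + y\<^sup>2)"
    unfolding s_def by (simp add: ac_simps)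
  have "no_event_prob (x / y) x' y' = (y + x * x' * y') / (y * ((1 + x'\<^sup>2) * (1 + y'\<^sup>2)))"
    using assms by (simp add: no_event_prob_eq add_divide_distrib)
  moreover have "0 < 1 + y\<^sup>2" "0 < y * ((1 + x'\<^sup>2) * (1 + y'\<^sup>2))"
    using assms by (auto simp: add_pos_nonneg)
  ultimately show ?thesis
    using key by (simp add: divide_less_eq less_divide_eq)
qed

lemma no_event_prob_strict_antimono:
  assumes "0 < x'" "x' < x" "x < 1" "0 < y'" "y' < y" "y < 1" "r * y \<le> x" "r * x \<le> y"
  shows "no_event_prob r x y < no_event_prob r x' y'"
proof -
  have *: "no_event_prob r a b < no_event_prob r a' b'"
    if "0 < a'" "a' < a" "a \<le> b" "0 < b'" "b' < b" "b < 1" "r * b \<le> a" for a b a' b'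
  proof -
    have "r \<le> a / b" and "sd_prod a' b' < sd_prod a b"
      using that by (simp_all add: pos_le_divide_eq sd_prod_strict_mono)
    then have "0 \<le> (a / b - r) * (sd_prod a b - sd_prod a' b')"
      by simp
    moreover have "no_event_prob r a' b' - no_event_prob r a b
        = (no_event_prob (a / b) a' b' - no_event_prob (a / b) a b)
          + (a / b - r) * (sd_prod a b - sd_prod a' b')"
      by (simp add: no_event_prob_def algebra_simps)
    moreover have "no_event_prob (a / b) a b < no_event_prob (a / b) a' b'"
      using that no_event_prob_ratio_eq no_event_prob_ratio_gt by simp
    ultimately show ?thesis
      by linarith
  qed
  show ?thesis
  proof (cases "x \<le> y")
    case True
    then show ?thesis
      using * assms by blast
  next
    case False
    then have "no_event_prob r y x < no_event_prob r y' x'"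
      using * assms by simp
    then show ?thesis
      by (simp add: no_event_prob_commute)
  qed
qed

section \<open>The variance of the composite event\<close>

definition odds_gamma :: "real \<Rightarrow> real \<Rightarrow> real \<Rightarrow> real" where
  "odds_gamma r x y = 1 + 1 / x\<^sup>2 + 1 / y\<^sup>2 + r * (x * y - 1 / (x * y) + x / y + y / x)"

lemma odds_gamma_commute: "odds_gamma r x y = odds_gamma r y x"
  by (simp add: odds_gamma_def algebra_simps)

lemma no_event_prob_variance:
  assumes "0 < x" "0 < y"
  shows "no_event_prob r x y * (1 - no_event_prob r x y) = (sd_prod x y)\<^sup>2 * (odds_gamma r x y - r\<^sup>2)"
proof -
  define D where "D = (1 + x\<^sup>2) * (1 + y\<^sup>2)"
  define z where "z = x * y"
  have D: "0 < D"
    unfolding D_def by (auto simp: add_pos_nonneg)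
  have gamma: "z\<^sup>2 * odds_gamma r x y = x\<^sup>2 + y\<^sup>2 + z\<^sup>2 + r * (z ^ 3 - z + x\<^sup>2 * z + y\<^sup>2 * z)"
    unfolding odds_gamma_def z_def using assms
    by (simp add: field_simps power2_eq_square power3_eq_cube)
  have D1: "D - 1 = x\<^sup>2 + y\<^sup>2 + z\<^sup>2"
    unfolding D_def z_def by (simp add: algebra_simps power2_eq_square)
  have "no_event_prob r x y * (1 - no_event_prob r x y) = (1 + r * z) * (D - 1 - r * z) / D\<^sup>2"
    unfolding no_event_prob_eq D_def[symmetric] z_def using D
    by (simp add: field_simps power2_eq_square)
  also have "(1 + r * z) * (D - 1 - r * z) = z\<^sup>2 * odds_gamma r x y - z\<^sup>2 * r\<^sup>2"
    unfolding gamma D1 by (simp add: algebra_simps power2_eq_square power3_eq_cube)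
  also have "(z\<^sup>2 * odds_gamma r x y - z\<^sup>2 * r\<^sup>2) / D\<^sup>2 = (sd_prod x y)\<^sup>2 * (odds_gamma r x y - r\<^sup>2)"
    unfolding sd_prod_def D_def[symmetric] z_def[symmetric] using D
    by (simp add: field_simps power2_eq_square)
  finally show ?thesis .
qed

lemma odds_gamma_le_scaled:
  assumes "0 < k" "k \<le> 1" "0 < x" "x < 1" "0 < y" "y < 1" "r \<le> 1"
  shows "odds_gamma r x y \<le> odds_gamma r (k * x) (k * y)"
proof -
  define z where "z = x * y"
  define z' where "z' = k\<^sup>2 * z"
  define s where "s = x / y + y / x"
  have z: "0 < z" "z < 1"
    unfolding z_def using assms mult_strict_mono[of x 1 y 1] by auto
  have "k\<^sup>2 \<le> 1"
    using assms by (simp add: power_le_one)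
  then have z': "0 < z'" "z' \<le> z"
    unfolding z'_def using z assms by (auto simp: mult_le_cancel_right1)
  have "s - 2 = (x - y)\<^sup>2 / (x * y)"
    unfolding s_def using assms by (simp add: field_simps power2_eq_square)
  then have s: "2 \<le> s"
    using assms by (smt (verit) divide_nonneg_pos mult_pos_pos zero_le_power2)
  have "odds_gamma r (k * x) (k * y) - odds_gamma r x y
      = (s - r) * (1 / z' - 1 / z) - r * (z - z')"
    unfolding odds_gamma_def s_def z'_def z_def using assms
    by (simp add: field_simps power2_eq_square)
  moreover have "z - z' \<le> 1 / z' - 1 / z"
  proof -
    have "z * z' \<le> 1"
      using z z' mult_mono[of z 1 z' 1] by auto
    then have "(z - z') * (z * z') \<le> z - z'"
      using z' by (simp add: mult_left_le)
    then show ?thesis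
      using z z' by (simp add: field_simps)
  qed
  then have "(s - r) * (z - z') \<le> (s - r) * (1 / z' - 1 / z)"
    using s assms by (intro mult_left_mono) auto
  moreover have "r * (z - z') \<le> (s - r) * (z - z')"
    using s assms z' by (intro mult_right_mono) auto
  ultimately show ?thesis
    by linarith
qed

lemma odds_gamma_antimono_right:
  assumes "0 < x" "x < 1" "0 < y" "y \<le> y'" "y' < 1" "r * y' \<le> x"
  shows "odds_gamma r x y' \<le> odds_gamma r x y"
proof -
  define A where "A = x + 1 / x"
  define B where "B = 1 / x - x"
  define p where "p = y * y'"
  have AB: "0 < A" "0 < B" "A + B = 2 / x"
    unfolding A_def B_def using assms mult_strict_mono[of x 1 x 1]
    by (auto simp: field_simps add_pos_nonneg)
  have p: "0 < p" "p \<le> 1"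
    unfolding p_def using assms mult_mono[of y 1 y' 1] by auto
  have gamma: "odds_gamma r x t = 1 + 1 / x\<^sup>2 + 1 / t\<^sup>2 + r * (t * A - B / t)" if "0 < t" for t
    unfolding odds_gamma_def A_def B_def using assms that by (simp add: field_simps)
  have "0 < y'"
    using assms by linarith
  have "odds_gamma r x y - odds_gamma r x y' = (y' - y) * (y + y' - r * (A * p\<^sup>2 + B * p)) / p\<^sup>2"
    unfolding gamma[OF \<open>0 < y\<close>] gamma[OF \<open>0 < y'\<close>] p_def using assms
    by (simp add: field_simps power2_eq_square)
  moreover have "r * (A * p\<^sup>2 + B * p) \<le> y + y'"
  proof (cases "r \<le> 0")
    case True
    then show ?thesis
      using AB p assms by (smt (verit) mult_nonpos_nonneg mult_pos_pos zero_less_power)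
  next
    case False
    have "A * p\<^sup>2 \<le> A * p"
      using AB p by (simp add: power2_eq_square mult_le_cancel_left1)
    then have "A * p\<^sup>2 + B * p \<le> (2 / x) * p"
      by (simp add: distrib_right flip: AB(3))
    then have "r * (A * p\<^sup>2 + B * p) \<le> r * ((2 / x) * p)"
      using False by (intro mult_left_mono) auto
    also have "\<dots> = 2 * y * (r * y') / x"
      by (simp add: p_def)
    also have "\<dots> \<le> 2 * y"
      using assms by (simp add: divide_le_eq)
    finally show ?thesis
      using assms by linarith
  qed
  ultimately have "0 \<le> odds_gamma r x y - odds_gamma r x y'"
    using assms by (auto intro!: divide_nonneg_nonneg mult_nonneg_nonneg)
  then show ?thesis
    by simp
qed

lemma odds_gamma_antimono:
  assumes "0 < x'" "x' \<le> x" "x < 1" "0 < y'" "y' \<le> y" "y < 1" "r * y \<le> x" "r * x \<le> y"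
  shows "odds_gamma r x y \<le> odds_gamma r x' y'"
proof -
  have "r \<le> 1"
    using assms by (intro le_one_of_cross_mult_le[of x y]) auto
  have *: "odds_gamma r a b \<le> odds_gamma r a' b'"
    if "0 < a'" "a' \<le> a" "a < 1" "0 < b'" "b' \<le> b" "b < 1" "r * b \<le> a" "b' / b \<le> a' / a"
    for a b a' b'
  proof -
    define k where "k = a' / a"
    have k: "0 < k" "k \<le> 1" "k * a = a'" "b' \<le> k * b"
      unfolding k_def using that by (auto simp: field_simps)
    have "odds_gamma r a b \<le> odds_gamma r a' (k * b)"
      using odds_gamma_le_scaled[of k a b r] k that \<open>r \<le> 1\<close> by simp
    also have "\<dots> \<le> odds_gamma r a' b'"
    proof (rule odds_gamma_antimono_right)
      have "k * b \<le> b"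
        using k that by (simp add: mult_le_cancel_right1)
      then show "k * b < 1"
        using that by linarith
      have "r * (k * b) = k * (r * b)"
        by simp
      also have "\<dots> \<le> k * a"
        using that k by (intro mult_left_mono) auto
      finally show "r * (k * b) \<le> a'"
        using k by simp
    qed (use that k in auto)
    finally show ?thesis .
  qed
  show ?thesis
  proof (cases "y' / y \<le> x' / x")
    case True
    then show ?thesis
      using * assms by blast
  next
    case False
    then have "odds_gamma r y x \<le> odds_gamma r y' x'"
      using * assms by simp
    then show ?thesis
      by (simp add: odds_gamma_commute)
  qed
qed

lemma no_event_prob_variance_le:
  assumes "0 < x'" "x' < x" "x < 1" "0 < y'" "y' < y" "y < 1" "r * y \<le> x" "r * x \<le> y"
  shows "(sd_prod x' y')\<^sup>2 * (no_event_prob r x y * (1 - no_event_prob r x y))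
           \<le> (sd_prod x y)\<^sup>2 * (no_event_prob r x' y' * (1 - no_event_prob r x' y'))"
proof -
  have "0 < x" "0 < y"
    using assms by linarith+
  have "odds_gamma r x y \<le> odds_gamma r x' y'"
    using assms by (intro odds_gamma_antimono) auto
  then have "(sd_prod x' y')\<^sup>2 * ((sd_prod x y)\<^sup>2 * (odds_gamma r x y - r\<^sup>2))
      \<le> (sd_prod x y)\<^sup>2 * ((sd_prod x' y')\<^sup>2 * (odds_gamma r x' y' - r\<^sup>2))"
    by (simp add: mult_left_mono ac_simps)
  then show ?thesis
    unfolding no_event_prob_variance[OF \<open>0 < x\<close> \<open>0 < y\<close>] no_event_prob_variance[OF assms(1,4)] .
qed

section \<open>Monotonicity of the variance ratio\<close>

definition var_ratio :: "real \<Rightarrow> real \<Rightarrow> real" where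
  "var_ratio u v = (u * (1 - u) + v * (1 - v)) / (v - u)\<^sup>2"

lemma sqrt_var_weighted_less:
  fixes u v :: real
  assumes "0 < v" "v < u" "u + v < 1"
  shows "sqrt (v * (1 - v)) * (v + 3 * u - 2 * u * v - 2 * u\<^sup>2)
           < sqrt (u * (1 - u)) * (u + 3 * v - 2 * u * v - 2 * v\<^sup>2)"
proof -
  define A B where "A = sqrt (u * (1 - u))" and "B = sqrt (v * (1 - v))"
  define K1 K2 where "K1 = u + 3 * v - 2 * u * v - 2 * v\<^sup>2" and "K2 = v + 3 * u - 2 * u * v - 2 * u\<^sup>2"
  define X Y where "X = u * (1 - v)" and "Y = v * (1 - u)"
  have XY: "0 < X" "0 < Y"
    unfolding X_def Y_def using assms by auto
  have A: "0 < A" "A\<^sup>2 = u * (1 - u)" and B: "0 < B" "B\<^sup>2 = v * (1 - v)"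
    unfolding A_def B_def using assms by auto
  have "A * B = sqrt (X * Y)"
    unfolding A_def B_def X_def Y_def by (simp add: real_sqrt_mult[symmetric] algebra_simps)
  then have "(2 * (A * B))\<^sup>2 = 4 * (X * Y)"
    using XY by (simp add: power_mult_distrib)
  moreover have "0 < (X - Y)\<^sup>2"
    unfolding X_def Y_def using assms by (simp add: algebra_simps)
  ultimately have "(2 * (A * B))\<^sup>2 < (X + Y)\<^sup>2"
    by (simp add: power2_eq_square algebra_simps)
  then have "2 * (A * B) < X + Y"
    by (rule power2_less_imp_less) (use XY in auto)
  then have "0 < (u - v) * (1 - u - v) * ((X + Y) - 2 * (A * B))"
    using assms by (intro mult_pos_pos) auto
  also have "\<dots> = A\<^sup>2 * K1 - B\<^sup>2 * K2 + A * B * (K1 - K2)"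
    unfolding A(2) B(2) K1_def K2_def X_def Y_def by (simp add: algebra_simps power2_eq_square)
  also have "\<dots> = (A * K1 - B * K2) * (A + B)"
    by (simp add: algebra_simps power2_eq_square)
  finally have "0 < A * K1 - B * K2"
    using A B by (simp add: zero_less_mult_iff)
  then show ?thesis
    unfolding A_def B_def K1_def K2_def by simp
qed

lemma var_ratio_slope_pos:
  fixes s0 s1 u v :: real
  assumes "0 < s1" "s1 < s0" "0 < v" "v < u" "u < 1"
    and "s1\<^sup>2 * (u * (1 - u)) \<le> s0\<^sup>2 * (v * (1 - v))"
  shows "s1 * (v + 3 * u - 2 * u * v - 2 * u\<^sup>2) < s0 * (u + 3 * v - 2 * u * v - 2 * v\<^sup>2)"
proof -
  define K1 K2 where "K1 = u + 3 * v - 2 * u * v - 2 * v\<^sup>2" and "K2 = v + 3 * u - 2 * u * v - 2 * u\<^sup>2"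
  have "K1 = u * (1 - v) + v * (3 - 2 * v - u)"
    unfolding K1_def by (simp add: algebra_simps power2_eq_square)
  then have K1: "0 < K1"
    using assms by (smt (verit) mult_pos_pos)
  have K12: "K1 - K2 = 2 * (u - v) * (u + v - 1)"
    unfolding K1_def K2_def by (simp add: algebra_simps power2_eq_square)
  show ?thesis
  proof (cases "1 \<le> u + v")
    case True
    then have "K2 \<le> K1"
      using K12 assms by (smt (verit) mult_nonneg_nonneg)
    then have "s1 * K2 \<le> s1 * K1"
      using assms by (intro mult_left_mono) auto
    also have "\<dots> < s0 * K1"
      using assms K1 by simp
    finally show ?thesis
      unfolding K1_def K2_def .
  next
    case False
    define A B where "A = sqrt (u * (1 - u))" and "B = sqrt (v * (1 - v))"
    have A: "0 < A" and B: "0 < B"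
      unfolding A_def B_def using assms by auto
    have "(s1 * A)\<^sup>2 \<le> (s0 * B)\<^sup>2"
      unfolding A_def B_def using assms by (simp add: power_mult_distrib)
    then have "s1 * A \<le> s0 * B"
      by (rule power2_le_imp_le) (use assms B in simp)
    have "B * K2 < A * K1"
      unfolding A_def B_def K1_def K2_def using sqrt_var_weighted_less assms False by simp
    show ?thesis
    proof (cases "K2 \<le> 0")
      case True
      then show ?thesis
        using assms K1 unfolding K1_def K2_def by (smt (verit) mult_nonneg_nonpos mult_pos_pos)
    next
      case False
      have "A * (s1 * K2) = (s1 * A) * K2"
        by simp
      also have "\<dots> \<le> (s0 * B) * K2"
        using \<open>s1 * A \<le> s0 * B\<close> False by (intro mult_right_mono) auto
      also have "\<dots> < A * (s0 * K1)"
        using \<open>B * K2 < A * K1\<close> assms by simp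
      finally show ?thesis
        using A unfolding K1_def K2_def by simp
    qed
  qed
qed

lemma var_ratio_affine_has_derivative:
  fixes a b r s0 s1 u v :: real
  assumes "a - r * s0 = u" "b - r * s1 = v" "u \<noteq> v"
  shows "((\<lambda>t. var_ratio (a - t * s0) (b - t * s1)) has_real_derivative
           (s0 * (u + 3 * v - 2 * u * v - 2 * v\<^sup>2) - s1 * (v + 3 * u - 2 * u * v - 2 * u\<^sup>2))
             / (u - v) ^ 3) (at r)"
proof -
  define N' where "N' = - s0 * (1 - 2 * u) - s1 * (1 - 2 * v)"
  define K where "K = s0 * (u + 3 * v - 2 * u * v - 2 * v\<^sup>2) - s1 * (v + 3 * u - 2 * u * v - 2 * u\<^sup>2)"
  have N: "((\<lambda>t. (a - t * s0) * (1 - (a - t * s0)) + (b - t * s1) * (1 - (b - t * s1)))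
      has_real_derivative N') (at r)"
    unfolding N'_def using assms(1,2) by (auto intro!: derivative_eq_intros simp: algebra_simps)
  have D: "((\<lambda>t. ((b - t * s1) - (a - t * s0))\<^sup>2) has_real_derivative 2 * (v - u) * (s0 - s1)) (at r)"
    using assms(1,2) by (auto intro!: derivative_eq_intros simp: algebra_simps)
  have "((b - r * s1) - (a - r * s0))\<^sup>2 \<noteq> 0"
    using assms by simp
  from DERIV_divide[OF N D this]
  have "((\<lambda>t. var_ratio (a - t * s0) (b - t * s1)) has_real_derivative
      (N' * (v - u)\<^sup>2 - (u * (1 - u) + v * (1 - v)) * (2 * (v - u) * (s0 - s1)))
        / ((v - u)\<^sup>2 * (v - u)\<^sup>2)) (at r)"
    unfolding var_ratio_def assms(1,2) .
  also have "N' * (v - u)\<^sup>2 - (u * (1 - u) + v * (1 - v)) * (2 * (v - u) * (s0 - s1)) = (u - v) * K"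
    unfolding N'_def K_def by (simp add: algebra_simps power2_eq_square)
  also have "(v - u)\<^sup>2 * (v - u)\<^sup>2 = (u - v) * (u - v) ^ 3"
    by (simp add: power2_eq_square power3_eq_cube algebra_simps)
  also have "(u - v) * K / ((u - v) * (u - v) ^ 3) = K / (u - v) ^ 3"
    using assms(3) by simp
  finally show ?thesis
    unfolding K_def .
qed

lemma var_ratio_affine_strict_mono_on:
  fixes a b s0 s1 lo hi :: real
  assumes "0 < s1" "s1 < s0"
    and range: "\<And>r. r \<in> {lo..hi} \<Longrightarrow> 0 < b - r * s1 \<and> b - r * s1 < a - r * s0 \<and> a - r * s0 < 1"
    and var: "\<And>r. r \<in> {lo..hi} \<Longrightarrow>
      s1\<^sup>2 * ((a - r * s0) * (1 - (a - r * s0))) \<le> s0\<^sup>2 * ((b - r * s1) * (1 - (b - r * s1)))"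
  shows "strict_mono_on {lo..hi} (\<lambda>r. var_ratio (a - r * s0) (b - r * s1))"
proof (rule strict_mono_onI)
  fix r t
  assume "r \<in> {lo..hi}" "t \<in> {lo..hi}" "r < t"
  show "var_ratio (a - r * s0) (b - r * s1) < var_ratio (a - t * s0) (b - t * s1)"
  proof (rule DERIV_pos_imp_increasing[OF \<open>r < t\<close>])
    fix x
    assume "r \<le> x" "x \<le> t"
    with \<open>r \<in> {lo..hi}\<close> \<open>t \<in> {lo..hi}\<close> have x: "x \<in> {lo..hi}"
      by auto
    define u v where "u = a - x * s0" and "v = b - x * s1"
    have "0 < v" "v < u" "u < 1" and "s1\<^sup>2 * (u * (1 - u)) \<le> s0\<^sup>2 * (v * (1 - v))"
      using range[OF x] var[OF x] by (simp_all add: u_def v_def)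
    then have "0 < (s0 * (u + 3 * v - 2 * u * v - 2 * v\<^sup>2) - s1 * (v + 3 * u - 2 * u * v - 2 * u\<^sup>2))
                   / (u - v) ^ 3"
      using var_ratio_slope_pos[of s1 s0 v u] assms(1,2) by simp
    with var_ratio_affine_has_derivative[of a x s0 u b s1 v]
    show "\<exists>y. ((\<lambda>t. var_ratio (a - t * s0) (b - t * s1)) has_real_derivative y) (at x) \<and> 0 < y"
      using \<open>v < u\<close> by (auto simp: u_def v_def)
  qed
qed

lemma var_ratio_no_event_prob_strict_mono_on:
  assumes odds: "0 < x'" "x' < x" "x < 1" "0 < y'" "y' < y" "y < 1"
    and lo: "- (x * y) \<le> lo" "- (x' * y') \<le> lo" and hi: "hi \<le> x / y" "hi \<le> y / x"
  shows "strict_mono_on {lo..hi} (\<lambda>r. var_ratio (1 - no_event_prob r x y) (1 - no_event_prob r x' y'))"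
proof -
  define c c' where "c = 1 - 1 / ((1 + x\<^sup>2) * (1 + y\<^sup>2))" and "c' = 1 - 1 / ((1 + x'\<^sup>2) * (1 + y'\<^sup>2))"
  have affine: "1 - no_event_prob r x y = c - r * sd_prod x y"
    "1 - no_event_prob r x' y' = c' - r * sd_prod x' y'" for r
    by (simp_all add: no_event_prob_def c_def c'_def)
  have admissible: "- (x * y) \<le> r" "- (x' * y') \<le> r" "r * y \<le> x" "r * x \<le> y" "r \<le> 1"
    if "r \<in> {lo..hi}" for r
  proof -
    show "- (x * y) \<le> r" "- (x' * y') \<le> r"
      using that lo by auto
    have "r * y \<le> hi * y" "r * x \<le> hi * x"
      using that odds by (auto intro!: mult_right_mono)
    moreover have "hi * y \<le> x" "hi * x \<le> y"
      using hi odds by (simp_all add: pos_le_divide_eq)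
    ultimately show "r * y \<le> x" "r * x \<le> y"
      by linarith+
    then show "r \<le> 1"
      using odds by (intro le_one_of_cross_mult_le[of x y]) auto
  qed
  have "strict_mono_on {lo..hi} (\<lambda>r. var_ratio (c - r * sd_prod x y) (c' - r * sd_prod x' y'))"
  proof (rule var_ratio_affine_strict_mono_on)
    show "0 < sd_prod x' y'" "sd_prod x' y' < sd_prod x y"
      using odds by (simp_all add: sd_prod_pos sd_prod_strict_mono)
  next
    fix r
    assume "r \<in> {lo..hi}"
    note r = admissible[OF this]
    show "0 < c' - r * sd_prod x' y' \<and> c' - r * sd_prod x' y' < c - r * sd_prod x y \<and> c - r * sd_prod x y < 1"
      unfolding affine[symmetric]
      using no_event_prob_bounds[of x y r] no_event_prob_bounds[of x' y' r]
        no_event_prob_strict_antimono[of x' x y' y r] odds r by auto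
    show "(sd_prod x' y')\<^sup>2 * ((c - r * sd_prod x y) * (1 - (c - r * sd_prod x y)))
        \<le> (sd_prod x y)\<^sup>2 * ((c' - r * sd_prod x' y') * (1 - (c' - r * sd_prod x' y')))"
      unfolding affine[symmetric]
      using no_event_prob_variance_le[of x' x y' y r] odds r by (simp add: ac_simps)
  qed
  then show ?thesis
    unfolding affine .
qed

lemma sample_size_root_odds:
  assumes "0 < p1" "p1 < 1" "0 < p2" "p2 < 1" "0 < p1 + d1" "p1 + d1 < 1" "0 < p2 + d2" "p2 + d2 < 1"
  shows "sample_size za zb (p1, p2) (d1, d2) r
           = 2 * (za + zb)\<^sup>2 * var_ratio (1 - no_event_prob r (root_odds p1) (root_odds p2))
                (1 - no_event_prob r (root_odds (p1 + d1)) (root_odds (p2 + d2)))"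
proof -
  define u where "u = 1 - no_event_prob r (root_odds p1) (root_odds p2)"
  define v where "v = 1 - no_event_prob r (root_odds (p1 + d1)) (root_odds (p2 + d2))"
  have ps: "p_star0 (p1, p2) r = u"
    using no_event_prob_root_odds[of p1 p2 r] assms by (simp add: u_def p_star0_def)
  have ds: "delta_star (p1, p2) (d1, d2) r = v - u"
    using no_event_prob_root_odds[of p1 p2 r] no_event_prob_root_odds[of "p1 + d1" "p2 + d2" r] assms
    by (simp add: u_def v_def delta_star_def algebra_simps)
  show ?thesis
    unfolding sample_size_def Let_def ps ds var_ratio_def u_def[symmetric] v_def[symmetric]
    by (simp add: algebra_simps)
qed

theorem theorem1:
  fixes \<alpha> \<beta> z\<alpha> z\<beta> p1 p2 d1 d2 :: real
  assumes "0 < \<alpha>" "\<alpha> < 1/2" "0 < \<beta>" "\<beta> < 1/2"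
    and "is_upper_quantile \<alpha> z\<alpha>" "is_upper_quantile \<beta> z\<beta>"
    and "0 < p1" "p1 < 1/2" "0 < p2" "p2 < 1/2"
    and "d1 < 0" "d2 < 0" "p1 + d1 > 0" "p2 + d2 > 0"
  shows "strict_mono_on {B_L (p1, p2) (d1, d2) .. B_U (p1, p2) (d1, d2)}
           (\<lambda>\<rho>. sample_size z\<alpha> z\<beta> (p1, p2) (d1, d2) \<rho>)
       \<and> (\<forall>\<rho> \<in> {B_L (p1, p2) (d1, d2) .. B_U (p1, p2) (d1, d2)}.
            sample_size z\<alpha> z\<beta> (p1, p2) (d1, d2) (B_L (p1, p2) (d1, d2))
              \<le> sample_size z\<alpha> z\<beta> (p1, p2) (d1, d2) \<rho>
          \<and> sample_size z\<alpha> z\<beta> (p1, p2) (d1, d2) \<rho>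
              \<le> sample_size z\<alpha> z\<beta> (p1, p2) (d1, d2) (B_U (p1, p2) (d1, d2)))"
proof -
  let ?I = "{B_L (p1, p2) (d1, d2) .. B_U (p1, p2) (d1, d2)}"
  let ?n = "sample_size z\<alpha> z\<beta> (p1, p2) (d1, d2)"
  let ?x = "root_odds p1" and ?y = "root_odds p2"
  let ?x' = "root_odds (p1 + d1)" and ?y' = "root_odds (p2 + d2)"
  have "0 < z\<alpha>" "0 < z\<beta>"
    using upper_quantile_pos assms(2,4,5,6) by blast+
  have odds: "0 < ?x'" "?x' < ?x" "?x < 1" "0 < ?y'" "?y' < ?y" "?y < 1"
    using assms by (auto intro: root_odds_pos root_odds_strict_mono root_odds_less_1)
  have "strict_mono_on ?I (\<lambda>r. var_ratio (1 - no_event_prob r ?x ?y) (1 - no_event_prob r ?x' ?y'))"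
    using odds B_L_ge B_U_le by (rule var_ratio_no_event_prob_strict_mono_on)
  moreover have "?n r = 2 * (z\<alpha> + z\<beta>)\<^sup>2 * var_ratio (1 - no_event_prob r ?x ?y) (1 - no_event_prob r ?x' ?y')"
    for r
    using assms by (intro sample_size_root_odds) auto
  ultimately have "strict_mono_on ?I ?n"
    using \<open>0 < z\<alpha>\<close> \<open>0 < z\<beta>\<close> by (simp add: strict_mono_on_def)
  then show ?thesis
    by (auto intro: strict_mono_on_leD)
qed

end
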